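(* Let $m\geq 1$ and let $f=a_0+a_1z+\cdots+a_mz^m\in\mathbb{Z}[z]$ be a primitive polynomial with $a_m\neq 0$ such that $a_0=\pm p^kd$ for some positive integers $k,d$ and a prime $p$ with $p\nmid d$, and such that every complex zero of $f$ lies outside the closed disk $\{z\in\mathbb{C}:|z|\leq d\}$. Suppose there is an index $j$ with $1\leq j\leq m$ such that $p\nmid a_j$. Then $f$ is a product of at most $\min\{k,j\}$ irreducible polynomials in $\mathbb{Z}[z]$. In particular, if $k=1$ or $j=1$, then $f$ is irreducible in $\mathbb{Z}[z]$.
   Context: A polynomial in $\mathbb{Z}[z]$ is primitive if the greatest common divisor of its coefficients is $1$. "$f$ is a product of at most $r$ irreducible polynomials" means that in a factorization of $f$ into irreducible elements of $\mathbb{Z}[z]$, the number of factors (counted with multiplicity) is at most $r$. *)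

theory Defs
  imports "HOL-Computational_Algebra.Computational_Algebra" Complex_Main
begin

definition prod_at_most_irreducibles :: "int poly \<Rightarrow> nat \<Rightarrow> bool" where
  "prod_at_most_irreducibles f r \<longleftrightarrow>
     (\<exists>fs :: int poly list. (\<forall>g\<in>set fs. irreducible g) \<and> prod_list fs = f \<and> length fs \<le> r)"

end

theory Submission
  imports Defs
begin

text \<open>Every irreducible factor g of f divides the primitive polynomial f, so it has positive degree,
  and its complex roots are roots of f. Hence the modulus of its constant term, the leading
  coefficient times the product of the moduli of the roots, exceeds d. As g(0) divides
  f(0) = +-p^k d, this forces p to divide g(0). Consequently a factorization of f into
  r irreducibles makes p^r divide f(0), so r \<le> k, and makes p divide the coefficients of
  1, z, ..., z^(r-1) in f, so r \<le> j.\<close>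

lemma irreducible_factorization_exists:
  fixes x :: "'a :: factorial_semiring"
  assumes "x \<noteq> 0" and "\<not> is_unit x"
  obtains fs where "\<forall>g\<in>set fs. irreducible g" and "prod_list fs = x"
proof -
  obtain A where A: "\<forall>y. y \<in># A \<longrightarrow> prime_elem y" "normalize (prod_mset A) = normalize x"
    using prime_factorization_exists[OF assms(1)] by blast
  obtain u where u: "is_unit u" "x = u * prod_mset A"
    using A(2) by (auto elim: associatedE2)
  obtain xs where xs: "mset xs = A"
    using ex_mset by blast
  have irr: "\<forall>y\<in>set xs. irreducible y"
    using A(1) xs by (auto intro: prime_elem_imp_irreducible)
  have x_eq: "x = u * prod_list xs"
    using u(2) xs by (metis prod_mset_prod_list)
  show thesis
  proof (cases xs)
    case Nil
    then show ?thesis using x_eq u(1) assms(2) by simp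
  next
    case (Cons y ys)
    show ?thesis
    proof (rule that[of "(u * y) # ys"])
      show "\<forall>g\<in>set ((u * y) # ys). irreducible g"
        using irr Cons irreducible_mult_unit_left[OF u(1)] by auto
      show "prod_list ((u * y) # ys) = x"
        using x_eq Cons by (simp add: mult.assoc)
    qed
  qed
qed

lemma map_poly_of_int_mult:
  "map_poly (of_int :: int \<Rightarrow> 'a :: comm_ring_1) (p * q) = map_poly of_int p * map_poly of_int q"
  by (rule poly_eqI) (simp add: coeff_map_poly coeff_mult of_int_sum)

lemma power_length_dvd_prod_list:
  fixes a :: "'a :: comm_monoid_mult"
  shows "\<forall>x\<in>set xs. a dvd x \<Longrightarrow> a ^ length xs dvd prod_list xs"
  by (induction xs) (auto intro: mult_dvd_mono)

lemma dvd_coeff_prod_list_if_dvd_coeff_0: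
  fixes a :: "'a :: comm_semiring_1"
  assumes "\<forall>g\<in>set fs. a dvd coeff g 0" and "i < length fs"
  shows "a dvd coeff (prod_list fs) i"
  using assms
proof (induction fs arbitrary: i)
  case Nil
  then show ?case by simp
next
  case (Cons g gs)
  have "a dvd coeff g l * coeff (prod_list gs) (i - l)" if "l \<le> i" for l
  proof (cases "l = 0")
    case True
    then show ?thesis using Cons.prems(1) by simp
  next
    case False
    then have "i - l < length gs" using Cons.prems(2) that by auto
    then show ?thesis using Cons by auto
  qed
  then show ?case
    by (auto simp: coeff_mult intro: dvd_sum)
qed

lemma norm_coeff_0_gt_if_roots_outside_disc:
  fixes G :: "complex poly" and d :: real
  assumes "degree G \<ge> 1" and "d \<ge> 0"
    and roots: "\<forall>z. poly G z = 0 \<longrightarrow> cmod z > d"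
  shows "cmod (coeff G 0) > cmod (lead_coeff G) * d ^ degree G"
proof -
  obtain root where G: "smult (lead_coeff G) (\<Prod>i<degree G. [:-root i, 1:]) = G"
    using complex_poly_decompose' by blast
  have root_gt: "cmod (root i) > d" if "i < degree G" for i
  proof -
    have "poly G (root i) = lead_coeff G * (\<Prod>l<degree G. poly [:-root l, 1:] (root i))"
      by (subst G[symmetric]) (simp add: poly_prod)
    also have "\<dots> = 0" using that by (auto intro!: bexI[of _ i])
    finally show ?thesis using roots by blast
  qed
  have "coeff G 0 = lead_coeff G * (\<Prod>i<degree G. - root i)"
    by (subst G[symmetric]) (simp add: poly_0_coeff_0[symmetric] poly_prod)
  then have norm_coeff_0: "cmod (coeff G 0) = cmod (lead_coeff G) * (\<Prod>i<degree G. cmod (root i))"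
    by (simp add: norm_mult prod_norm[symmetric])
  have "d ^ degree G = (\<Prod>i<degree G. d)" by simp
  also have "\<dots> < (\<Prod>i<degree G. cmod (root i))"
    using assms(1,2) root_gt
    by (intro prod_mono_strict[of 0])
       (auto intro: less_imp_le le_less_trans[OF assms(2)] simp del: zero_less_norm_iff)
  finally have "d ^ degree G < (\<Prod>i<degree G. cmod (root i))" .
  moreover have "lead_coeff G \<noteq> 0" using assms(1) by auto
  ultimately show ?thesis
    unfolding norm_coeff_0 by simp
qed

lemma abs_coeff_0_gt_if_roots_outside_disc:
  fixes g :: "int poly" and d :: real
  assumes "degree g \<ge> 1" and "d \<ge> 1"
    and "\<forall>z::complex. poly (map_poly of_int g) z = 0 \<longrightarrow> cmod z > d"
  shows "\<bar>real_of_int (coeff g 0)\<bar> > d"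
proof -
  let ?G = "map_poly (of_int :: int \<Rightarrow> complex) g"
  have lead_coeff_ge: "cmod (lead_coeff ?G) \<ge> 1"
  proof -
    have "lead_coeff g \<noteq> 0" using assms(1) by auto
    then have "\<bar>real_of_int (lead_coeff g)\<bar> \<ge> 1" by linarith
    then show ?thesis by (simp add: degree_map_poly coeff_map_poly norm_of_int)
  qed
  have "d \<le> d ^ degree ?G"
    using power_increasing[of 1 "degree g" d] assms(1,2) by (simp add: degree_map_poly)
  also have "\<dots> \<le> cmod (lead_coeff ?G) * d ^ degree ?G"
    using lead_coeff_ge assms(2) by (simp add: mult_le_cancel_right1)
  also have "\<dots> < cmod (coeff ?G 0)"
    using assms by (intro norm_coeff_0_gt_if_roots_outside_disc) (auto simp: degree_map_poly)
  finally have "cmod (coeff ?G 0) > d" .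
  then show ?thesis by (simp add: coeff_map_poly norm_of_int)
qed

lemma degree_pos_if_irreducible_dvd_primitive:
  fixes g f :: "int poly"
  assumes "irreducible g" and "g dvd f" and "content f = 1"
  shows "degree g \<ge> 1"
proof (rule ccontr)
  assume "\<not> degree g \<ge> 1"
  then obtain c where c: "g = [:c:]"
    by (metis degree_eq_zeroE less_one not_less)
  then have "c dvd content f"
    using assms(2) by (simp add: const_poly_dvd_iff_dvd_content)
  then have "is_unit g"
    using c assms(3) by (simp add: is_unit_poly_iff)
  then show False
    using assms(1) by (simp add: irreducible_def)
qed

lemma prime_dvd_coeff_0_of_irreducible_factor:
  fixes f g :: "int poly" and p k d :: nat
  assumes "irreducible g" and "g dvd f" and "content f = 1"
    and "prime p" and "d \<ge> 1" and "coeff f 0 dvd int (p ^ k * d)"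
    and "\<forall>z::complex. poly (map_poly of_int f) z = 0 \<longrightarrow> cmod z > real d"
  shows "int p dvd coeff g 0"
proof (rule ccontr)
  assume not_dvd: "\<not> int p dvd coeff g 0"
  obtain h where h: "f = g * h"
    using assms(2) by (auto elim: dvdE)
  have "\<forall>z::complex. poly (map_poly of_int g) z = 0 \<longrightarrow> cmod z > real d"
    using assms(7) h by (simp add: map_poly_of_int_mult)
  then have gt: "\<bar>real_of_int (coeff g 0)\<bar> > real d"
    using assms(1-3,5) degree_pos_if_irreducible_dvd_primitive
    by (intro abs_coeff_0_gt_if_roots_outside_disc) auto
  have "coeff g 0 dvd int (p ^ k) * int d"
    using assms(6) h by (auto simp: coeff_mult_0 intro: dvd_trans)
  moreover have "coprime (coeff g 0) (int p ^ k)"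
    using assms(4) not_dvd by (simp add: prime_imp_coprime ac_simps)
  ultimately have "coeff g 0 dvd int d"
    by (simp add: coprime_dvd_mult_right_iff)
  then have "\<bar>coeff g 0\<bar> \<le> \<bar>int d\<bar>"
    using assms(5) by (intro dvd_imp_le_int) auto
  then show False
    using gt by linarith
qed

lemma length_le_if_prime_dvd_all:
  fixes xs :: "int list" and p k d :: nat
  assumes "prime p" and "\<not> p dvd d"
    and "\<forall>x\<in>set xs. int p dvd x" and "prod_list xs dvd int (p ^ k * d)"
  shows "length xs \<le> k"
proof (rule ccontr)
  assume "\<not> length xs \<le> k"
  then have "int p ^ Suc k dvd int p ^ length xs"
    by (intro le_imp_power_dvd) auto
  also have "\<dots> dvd prod_list xs"
    using assms(3) by (rule power_length_dvd_prod_list)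
  also have "\<dots> dvd int (p ^ k * d)"
    by (fact assms(4))
  finally have "p ^ k * p dvd p ^ k * d"
    by (simp add: of_nat_dvd_iff[symmetric] ac_simps)
  then show False
    using assms(1,2) by (simp add: prime_gt_0_nat)
qed

theorem theorem2:
  fixes f :: "int poly" and p k d j :: nat
  assumes "degree f \<ge> 1"
    and "content f = 1"
    and "prime p" and "k \<ge> 1" and "d \<ge> 1" and "\<not> p dvd d"
    and "coeff f 0 = int (p ^ k * d) \<or> coeff f 0 = - int (p ^ k * d)"
    and "\<forall>z::complex. poly (map_poly of_int f) z = 0 \<longrightarrow> cmod z > real d"
    and "1 \<le> j" and "j \<le> degree f" and "\<not> int p dvd coeff f j"
  shows "prod_at_most_irreducibles f (min k j)
         \<and> ((k = 1 \<or> j = 1) \<longrightarrow> irreducible f)"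
proof -
  have nonzero: "f \<noteq> 0" and not_unit: "\<not> is_unit f"
    using assms(1) by (auto simp: is_unit_poly_iff)
  obtain fs where irr: "\<forall>g\<in>set fs. irreducible g" and prod: "prod_list fs = f"
    using irreducible_factorization_exists[OF nonzero not_unit] by blast
  have coeff_0_dvd: "coeff f 0 dvd int (p ^ k * d)"
    using assms(7) by auto
  have p_dvd: "\<forall>g\<in>set fs. int p dvd coeff g 0"
  proof
    fix g assume "g \<in> set fs"
    then show "int p dvd coeff g 0"
      using irr prod assms(2,3,5,8) coeff_0_dvd
      by (intro prime_dvd_coeff_0_of_irreducible_factor[of g f p d k]) (auto simp: prod_list_dvd)
  qed
  have "length (map (\<lambda>g. coeff g 0) fs) \<le> k"
    using assms(3,6) p_dvd coeff_0_dvd prod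
    by (intro length_le_if_prime_dvd_all) (auto simp: coeff_0_prod_list[symmetric])
  then have length_k: "length fs \<le> k"
    by simp
  have length_j: "length fs \<le> j"
    using dvd_coeff_prod_list_if_dvd_coeff_0[OF p_dvd, of j] prod assms(11) by fastforce
  have "prod_at_most_irreducibles f (min k j)"
    unfolding prod_at_most_irreducibles_def using irr prod length_k length_j by auto
  moreover have "irreducible f" if "k = 1 \<or> j = 1"
  proof -
    have "fs \<noteq> []" and "length fs \<le> 1"
      using prod not_unit that length_k length_j by auto
    then obtain g where "fs = [g]"
      by (cases fs) auto
    then show ?thesis
      using irr prod by simp
  qed
  ultimately show ?thesis
    by blast
qed

end
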